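(* Let $X,Y$ be real-valued random variables on an atomless probability space (no integrability assumed). The following are equivalent: (i) $X\le^\dagger_{\rm cx} Y$; (ii) for all $p\in(0,1)$, $$\int_0^p F_X^{-1}(t)\,\mathrm dt \ge \int_0^p F_Y^{-1}(t)\,\mathrm dt \quad\text{and}\quad \int_p^1 F_X^{-1}(t)\,\mathrm dt \le \int_p^1 F_Y^{-1}(t)\,\mathrm dt,$$ where each of these inequalities between elements of $[-\infty,\infty]$ is considered true whenever it has the form $\infty\le x$ or $x\le-\infty$ for some $x\in[-\infty,\infty]$; (iii) for all $w\in\mathbb R$, $$\mathbb E[(X-w)_-]\le \mathbb E[(Y-w)_-]\quad\text{and}\quad \mathbb E[(X-w)_+]\le \mathbb E[(Y-w)_+],$$ with the same convention that an inequality of the form $\infty\le x$ or $x\le -\infty$, $x\in[-\infty,\infty]$, is considered true.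
   Context: For $x\in\mathbb R$, $x_+=\max\{x,0\}$, $x_-=\max\{-x,0\}$. $\mathcal U_{\rm cx}$ is the set of all convex functions $\mathbb R\to\mathbb R$. We write $X\le^\dagger_{\rm cx}Y$ (the "$^\dagger$convex order") if $\mathbb E[u(X)]\le \mathbb E[u(Y)]$ for all $u\in\mathcal U_{\rm cx}$ such that both expectations $\mathbb E[u(X)]$ and $\mathbb E[u(Y)]$ are finite. $F_X^{-1}(t)=\inf\{x\in\mathbb R:\mathbb P(X\le x)\ge t\}$, $t\in(0,1)$, is the left quantile function. *)

theory Defs
  imports "HOL-Probability.Probability"
begin

definition atomless :: "'a measure \<Rightarrow> bool" where
  "atomless M \<longleftrightarrow> (\<forall>A\<in>sets M. 0 < measure M A \<longrightarrow>
      (\<exists>B\<in>sets M. B \<subseteq> A \<and> 0 < measure M B \<and> measure M B < measure M A))"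

definition quantile :: "'a measure \<Rightarrow> ('a \<Rightarrow> real) \<Rightarrow> real \<Rightarrow> real" where
  "quantile M X t = Inf {x::real. t \<le> measure M {\<omega> \<in> space M. X \<omega> \<le> x}}"

text \<open>Extended-real valued integral: integral of positive part minus integral of
negative part (only used where at least one of them is finite).\<close>
definition ext_integral :: "'b measure \<Rightarrow> ('b \<Rightarrow> real) \<Rightarrow> ereal" where
  "ext_integral N f = enn2ereal (\<integral>\<^sup>+ x. ennreal (f x) \<partial>N) - enn2ereal (\<integral>\<^sup>+ x. ennreal (- f x) \<partial>N)"

definition conv_le :: "ereal \<Rightarrow> ereal \<Rightarrow> bool" where
  "conv_le a b \<longleftrightarrow> a = \<infinity> \<or> b = -\<infinity> \<or> a \<le> b"

definition dagger_cx :: "'a measure \<Rightarrow> ('a \<Rightarrow> real) \<Rightarrow> ('a \<Rightarrow> real) \<Rightarrow> bool" where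
  "dagger_cx M X Y \<longleftrightarrow> (\<forall>u::real \<Rightarrow> real. convex_on UNIV u \<longrightarrow>
      integrable M (\<lambda>\<omega>. u (X \<omega>)) \<longrightarrow> integrable M (\<lambda>\<omega>. u (Y \<omega>)) \<longrightarrow>
      (\<integral>\<omega>. u (X \<omega>) \<partial>M) \<le> (\<integral>\<omega>. u (Y \<omega>) \<partial>M))"

end

theory Submission
  imports Defs
begin

text \<open>
  (i) \<open>\<Leftrightarrow>\<close> (iii): the hinges \<open>(x - w)\<^sub>+\<close> and \<open>(x - w)\<^sub>-\<close> are convex, which gives one
  direction. Conversely, a convex \<open>u\<close> splits at a minimum point into a nondecreasing and a
  nonincreasing convex part, and the nonincreasing part becomes nondecreasing under \<open>x \<mapsto> -x\<close>.
  Truncated from below at \<open>a\<close>, a nondecreasing convex function is the limit of constants plus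
  nonnegative combinations of hinges \<open>(x - t)\<^sub>+\<close>; integrability of \<open>u(X)\<close> and \<open>u(Y)\<close> makes
  all these hinges integrable, and dominated convergence (in the approximation and then in
  \<open>a \<rightarrow> -\<infinity>\<close>) carries the inequalities of (iii) over to \<open>E u(X) \<le> E u(Y)\<close>.

  (ii) \<open>\<Leftrightarrow>\<close> (iii): on \<open>(0, 1)\<close> with Lebesgue measure the quantile function has the law of \<open>X\<close>,
  so \<open>E (X - w)\<^sub>+ = \<integral>\<^sub>0\<^sup>1 (F\<^sub>X\<^sup>-\<^sup>1(t) - w)\<^sub>+ dt\<close>. For nondecreasing \<open>q\<close> the upper tail integrals and
  these excess integrals determine each other:
  \<open>\<integral>\<^sub>p\<^sup>1 q = min\<^sub>w ((1 - p) w + \<integral>\<^sub>0\<^sup>1 (q - w)\<^sub>+)\<close>, attained at \<open>w = q(p)\<close>, and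
  \<open>\<integral>\<^sub>0\<^sup>1 (q - w)\<^sub>+ = sup\<^sub>p (\<integral>\<^sub>p\<^sup>1 q - (1 - p) w)\<close>, approached as \<open>p\<close> decreases to the point where
  \<open>q\<close> crosses \<open>w\<close>. The substitution \<open>t \<mapsto> 1 - t\<close> turns lower tails into upper tails.
\<close>

section \<open>Convex functions of a real variable\<close>

lemma convex_on_slope_mono:
  fixes u :: "real \<Rightarrow> real"
  assumes "convex_on UNIV u" "x < t" "t < y"
  shows "(u t - u x) / (t - x) \<le> (u y - u t) / (y - t)"
proof -
  have "(u x - u t) / (x - t) \<le> (u t - u y) / (t - y)"
    using convex_on_slope_le[OF assms(1) _ _ assms(2,3)] by fastforce
  then show ?thesis
    by (metis minus_diff_eq minus_divide_divide)
qed

lemma convex_on_UNIV_borel_measurable: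
  fixes u :: "real \<Rightarrow> real"
  assumes "convex_on UNIV u"
  shows "u \<in> borel_measurable borel"
  using convex_on_continuous[OF open_UNIV assms] by (rule borel_measurable_continuous_onI)

lemma convex_on_max:
  assumes "convex_on S f" "convex_on S g"
  shows "convex_on S (\<lambda>x. max (f x) (g x))"
proof (rule convex_onI)
  fix t :: real and x y assume t: "0 < t" "t < 1" and xy: "x \<in> S" "y \<in> S"
  have "(1 - t) * f x + t * f y \<le> (1 - t) * max (f x) (g x) + t * max (f y) (g y)"
    "(1 - t) * g x + t * g y \<le> (1 - t) * max (f x) (g x) + t * max (f y) (g y)"
    using t by (intro add_mono mult_left_mono; simp)+
  then show "max (f ((1 - t) *\<^sub>R x + t *\<^sub>R y)) (g ((1 - t) *\<^sub>R x + t *\<^sub>R y))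
             \<le> (1 - t) * max (f x) (g x) + t * max (f y) (g y)"
    using convex_onD[OF assms(1), of t x y] convex_onD[OF assms(2), of t x y] t xy by auto
qed (use assms convex_on_imp_convex in auto)

lemma convex_on_reflect:
  fixes u :: "real \<Rightarrow> real"
  assumes "convex_on UNIV u"
  shows "convex_on UNIV (\<lambda>x. u (- x))"
proof (rule convex_onI)
  fix t x y :: real assume t: "0 < t" "t < 1"
  have "u ((1 - t) *\<^sub>R (-x) + t *\<^sub>R (-y)) \<le> (1 - t) * u (-x) + t * u (-y)"
    using convex_onD[OF assms, of t "-x" "-y"] t by simp
  then show "u (- ((1 - t) *\<^sub>R x + t *\<^sub>R y)) \<le> (1 - t) * u (- x) + t * u (- y)"
    by (simp add: algebra_simps)
qed simp

lemma convex_on_hinge: "convex_on UNIV (\<lambda>x::real. max (x - w) 0)"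
  by (intro convex_on_max convex_on_diff)
     (auto simp: convex_on_ident concave_on_const convex_on_const)

lemma convex_on_hinge_reflect: "convex_on UNIV (\<lambda>x::real. max (- x - w) 0)"
  using convex_on_reflect[OF convex_on_hinge[of w]] .

lemma convex_on_attains_min:
  fixes u :: "real \<Rightarrow> real"
  assumes cvx: "convex_on UNIV u" and "\<not> mono u" "\<not> antimono u"
  obtains m where "\<And>z. u m \<le> u z"
proof -
  obtain x y where xy: "x < y" "u y < u x"
    using \<open>\<not> mono u\<close> unfolding mono_def by (metis not_le order_le_less)
  obtain x' y' where xy': "x' < y'" "u x' < u y'"
    using \<open>\<not> antimono u\<close> unfolding antimono_def by (metis not_le order_le_less)
  let ?S = "{min x x' .. max y y'}"
  have "\<exists>m\<in>?S. \<forall>z\<in>?S. u m \<le> u z"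
    using convex_on_continuous[OF open_UNIV cvx] xy(1)
    by (intro continuous_attains_inf) (auto intro: continuous_on_subset)
  then obtain m where m: "\<And>z. z \<in> ?S \<Longrightarrow> u m \<le> u z" by blast
  have "u m \<le> u z" for z
  proof -
    consider "z \<in> ?S" | "max y y' < z" | "z < min x x'" by fastforce
    then show ?thesis
    proof cases
      case 2
      have "0 < (u y' - u x') / (y' - x')" using xy' by simp
      also have "\<dots> \<le> (u z - u y') / (z - y')"
        using 2 xy' by (intro convex_on_slope_mono[OF cvx]) auto
      finally have "u y' < u z" using 2 by (simp add: zero_less_divide_iff)
      moreover have "u m \<le> u y'" using m[of y'] xy xy' by auto
      ultimately show ?thesis by simp
    next
      case 3
      have "(u x - u z) / (x - z) \<le> (u y - u x) / (y - x)"
        using 3 xy by (intro convex_on_slope_mono[OF cvx]) auto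
      also have "\<dots> < 0" using xy by (simp add: divide_neg_pos)
      finally have "u x < u z" using 3 by (simp add: divide_less_0_iff)
      moreover have "u m \<le> u x" using m[of x] xy xy' by auto
      ultimately show ?thesis by simp
    qed (use m in auto)
  qed
  then show thesis by (rule that)
qed

lemma convex_on_mono_right_of_min:
  fixes u :: "real \<Rightarrow> real"
  assumes cvx: "convex_on UNIV u" and min: "\<And>z. u m \<le> u z" and "m \<le> s" "s \<le> t"
  shows "u s \<le> u t"
proof (cases "m < s \<and> s < t")
  case True
  have "0 \<le> (u s - u m) / (s - m)" using min[of s] True by simp
  also have "\<dots> \<le> (u t - u s) / (t - s)"
    using True by (intro convex_on_slope_mono[OF cvx]) auto
  finally show ?thesis using True by (simp add: zero_le_divide_iff)
next
  case False
  then have "s = m \<or> s = t" using assms by auto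
  then show ?thesis using min[of t] by auto
qed

text \<open>Splitting a convex function at a minimum point \<open>m\<close> writes it as
  \<open>u (max x m) + u (min x m) - u m\<close>, a nondecreasing plus a nonincreasing convex function.\<close>

lemma convex_on_max_at_min:
  fixes u :: "real \<Rightarrow> real"
  assumes cvx: "convex_on UNIV u" and min: "\<And>z. u m \<le> u z"
  shows "convex_on UNIV (\<lambda>x. u (max x m))" and "mono (\<lambda>x. u (max x m))"
proof -
  note up = convex_on_mono_right_of_min[OF cvx min]
  show "convex_on UNIV (\<lambda>x. u (max x m))"
  proof (rule convex_onI)
    fix t x y :: real assume t: "0 < t" "t < 1"
    have "u (max ((1 - t) *\<^sub>R x + t *\<^sub>R y) m) \<le> u ((1 - t) *\<^sub>R max x m + t *\<^sub>R max y m)"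
    proof (rule up)
      have "(1 - t) * x \<le> (1 - t) * max x m" "t * y \<le> t * max y m"
        "(1 - t) * m \<le> (1 - t) * max x m" "t * m \<le> t * max y m"
        using t by (auto intro!: mult_left_mono)
      moreover have "(1 - t) * m + t * m = m" by (simp add: algebra_simps)
      ultimately show "max ((1 - t) *\<^sub>R x + t *\<^sub>R y) m \<le> (1 - t) *\<^sub>R max x m + t *\<^sub>R max y m"
        unfolding real_scaleR_def by (intro max.boundedI) linarith+
    qed simp
    also have "\<dots> \<le> (1 - t) * u (max x m) + t * u (max y m)"
      using convex_onD[OF cvx, of t "max x m" "max y m"] t by simp
    finally show "u (max ((1 - t) *\<^sub>R x + t *\<^sub>R y) m) \<le> (1 - t) * u (max x m) + t * u (max y m)" .
  qed simp
  show "mono (\<lambda>x. u (max x m))"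
    by (rule monoI) (auto intro!: up)
qed

lemma convex_on_min_at_min:
  fixes u :: "real \<Rightarrow> real"
  assumes cvx: "convex_on UNIV u" and min: "\<And>z. u m \<le> u z"
  shows "convex_on UNIV (\<lambda>x. u (min x m))" and "antimono (\<lambda>x. u (min x m))"
proof -
  have refl: "u (min x m) = u (- max (- x) (- m))" for x by (simp add: max_def min_def)
  have "convex_on UNIV (\<lambda>x. u (- x))" "\<And>z. u (- (- m)) \<le> u (- z)"
    using convex_on_reflect[OF cvx] min by simp_all
  note v = convex_on_max_at_min[OF this]
  show "convex_on UNIV (\<lambda>x. u (min x m))"
    unfolding refl using convex_on_reflect[OF v(1)] by simp
  show "antimono (\<lambda>x. u (min x m))"
    unfolding refl
  proof (rule antimonoI)
    fix x y :: real assume "x \<le> y"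
    then have "max (- y) (- m) \<le> max (- x) (- m)" by simp
    from monoD[OF v(2) this] show "u (- max (- y) (- m)) \<le> u (- max (- x) (- m))" by simp
  qed
qed

lemma hinge_le_convex:
  fixes u :: "real \<Rightarrow> real"
  assumes cvx: "convex_on UNIV u" and "x0 < x1" "u x0 < u x1"
  defines "c \<equiv> (u x1 - u x0) / (x1 - x0)"
  shows "max (x - t) 0 \<le> (\<bar>u x\<bar> + \<bar>u x1\<bar>) / c + \<bar>x1 - t\<bar>"
proof -
  have c0: "0 < c" unfolding c_def using assms by auto
  show ?thesis
  proof (cases "x \<le> x1")
    case True
    have "0 \<le> (\<bar>u x\<bar> + \<bar>u x1\<bar>) / c" using c0 by simp
    then show ?thesis using True by auto
  next
    case False
    have "c \<le> (u x - u x1) / (x - x1)" unfolding c_def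
      using False assms by (intro convex_on_slope_mono[OF cvx]) auto
    then have "x - x1 \<le> (u x - u x1) / c" using False c0 by (simp add: field_simps)
    also have "\<dots> \<le> (\<bar>u x\<bar> + \<bar>u x1\<bar>) / c" using c0 by (intro divide_right_mono) auto
    finally have "x - x1 \<le> (\<bar>u x\<bar> + \<bar>u x1\<bar>) / c" .
    moreover have "0 \<le> (\<bar>u x\<bar> + \<bar>u x1\<bar>) / c" using c0 by simp
    ultimately show ?thesis by auto
  qed
qed

section \<open>Approximation by hinge functions\<close>

definition grid :: "real \<Rightarrow> real \<Rightarrow> nat \<Rightarrow> real" where
  "grid a h i = a + real i * h"

definition grid_slope :: "(real \<Rightarrow> real) \<Rightarrow> real \<Rightarrow> real \<Rightarrow> nat \<Rightarrow> real" where
  "grid_slope u a h i = (if i = 0 then 0 else (u (grid a h i) - u (grid a h (i - 1))) / h)"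

text \<open>The hinge at \<open>grid a h i\<close> carries the slope of \<open>u\<close> on the grid cell to its left, so
  \<open>hinge_approx\<close> is the polygonal interpolant of \<open>u\<close> shifted right by one cell; this puts it
  between \<open>u (max (x - 2 * h) a)\<close> and \<open>u (max x a)\<close>.\<close>

definition hinge_approx :: "(real \<Rightarrow> real) \<Rightarrow> real \<Rightarrow> real \<Rightarrow> nat \<Rightarrow> real \<Rightarrow> real" where
  "hinge_approx u a h N x =
     u a + (\<Sum>i\<in>{1..N}. (grid_slope u a h i - grid_slope u a h (i - 1)) * max (x - grid a h i) 0)"

lemma grid_Suc: "grid a h (Suc i) = grid a h i + h"
  unfolding grid_def by (simp add: algebra_simps)

lemma hinge_approx_Suc:
  "hinge_approx u a h (Suc N) x =
     hinge_approx u a h N x + (grid_slope u a h (Suc N) - grid_slope u a h N) * max (x - grid a h (Suc N)) 0"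
  unfolding hinge_approx_def by simp

lemma borel_measurable_hinge_approx [measurable]: "hinge_approx u a h N \<in> borel_measurable borel"
  unfolding hinge_approx_def by measurable

context
  fixes u :: "real \<Rightarrow> real" and a h :: real
  assumes cvx: "convex_on UNIV u" and mono: "mono u" and h: "0 < h"
begin

lemma grid_slope_nonneg: "0 \<le> grid_slope u a h i"
proof -
  have "u (grid a h (i - 1)) \<le> u (grid a h i)"
    using h by (intro monoD[OF mono]) (auto simp: grid_def intro!: mult_right_mono)
  then show ?thesis unfolding grid_slope_def using h by auto
qed

lemma grid_slope_mono: "grid_slope u a h (i - 1) \<le> grid_slope u a h i"
proof (cases "i \<le> 1")
  case True
  then show ?thesis using grid_slope_nonneg[of i] by (cases i) (auto simp: grid_slope_def)
next
  case False
  define k where "k = i - 2"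
  have k: "i = Suc (Suc k)" using False by (simp add: k_def)
  have "(u (grid a h (Suc k)) - u (grid a h k)) / (grid a h (Suc k) - grid a h k)
        \<le> (u (grid a h (Suc (Suc k))) - u (grid a h (Suc k))) / (grid a h (Suc (Suc k)) - grid a h (Suc k))"
    using h by (intro convex_on_slope_mono[OF cvx]) (auto simp: grid_Suc)
  then show ?thesis unfolding k grid_slope_def by (simp add: grid_Suc)
qed

lemma hinge_approx_ge: "u a \<le> hinge_approx u a h N x"
proof -
  have "0 \<le> (\<Sum>i\<in>{1..N}. (grid_slope u a h i - grid_slope u a h (i - 1)) * max (x - grid a h i) 0)"
    using grid_slope_mono by (intro sum_nonneg mult_nonneg_nonneg) auto
  then show ?thesis unfolding hinge_approx_def by simp
qed

lemma hinge_approx_beyond: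
  "grid a h N \<le> x \<Longrightarrow> hinge_approx u a h N x = u (grid a h N) + grid_slope u a h N * (x - grid a h N - h)"
proof (induction N)
  case 0
  then show ?case by (simp add: hinge_approx_def grid_def grid_slope_def)
next
  case (Suc N)
  have x: "grid a h N \<le> x" using Suc.prems h by (simp add: grid_Suc)
  have step: "grid_slope u a h (Suc N) * h = u (grid a h (Suc N)) - u (grid a h N)"
    using h by (simp add: grid_slope_def)
  have "hinge_approx u a h (Suc N) x = u (grid a h N) + grid_slope u a h N * (x - grid a h N - h)
          + (grid_slope u a h (Suc N) - grid_slope u a h N) * (x - grid a h (Suc N))"
    using Suc.IH[OF x] Suc.prems by (simp add: hinge_approx_Suc)
  also have "\<dots> = u (grid a h (Suc N)) + grid_slope u a h (Suc N) * (x - grid a h (Suc N) - h)"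
    using step by (simp add: grid_Suc algebra_simps)
  finally show ?case .
qed

lemma grid_slope_le_chord:
  assumes "0 < N" "grid a h N \<le> x"
  shows "grid_slope u a h N * (x - grid a h N) \<le> u x - u (grid a h N)"
proof (cases "x = grid a h N")
  case False
  then have x: "grid a h N < x" using assms by simp
  obtain k where k: "N = Suc k" using assms by (cases N) auto
  have "(u (grid a h N) - u (grid a h k)) / (grid a h N - grid a h k) \<le> (u x - u (grid a h N)) / (x - grid a h N)"
    using h x by (intro convex_on_slope_mono[OF cvx]) (auto simp: k grid_Suc)
  then have "grid_slope u a h N \<le> (u x - u (grid a h N)) / (x - grid a h N)"
    unfolding grid_slope_def using k by (simp add: grid_Suc)
  then show ?thesis using x by (simp add: pos_le_divide_eq mult.commute)
qed simp

lemma grid_value_minus_slope: "u (grid a h N) - grid_slope u a h N * h = u (max (grid a h N - h) a)"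
proof (cases N)
  case 0
  then show ?thesis using h by (simp add: grid_slope_def grid_def)
next
  case (Suc k)
  have "grid a h N - h = grid a h k" by (simp add: Suc grid_Suc)
  moreover have "a \<le> grid a h k" using h by (simp add: grid_def)
  ultimately show ?thesis using h by (simp add: grid_slope_def Suc)
qed

lemma hinge_approx_bounds:
  "(x \<le> grid a h N \<longrightarrow> u (max (x - 2 * h) a) \<le> hinge_approx u a h N x) \<and> hinge_approx u a h N x \<le> u (max x a)"
proof (induction N arbitrary: x)
  case 0
  have "u a \<le> u (max x a)" by (intro monoD[OF mono]) simp
  moreover have "x \<le> a \<Longrightarrow> max (x - 2 * h) a = a" using h by simp
  ultimately show ?case by (simp add: hinge_approx_def grid_def)
next
  case (Suc N)
  consider "x \<le> grid a h N" | "grid a h N < x" "x \<le> grid a h (Suc N)" | "grid a h (Suc N) < x"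
    by fastforce
  then show ?case
  proof cases
    case 1
    then have "hinge_approx u a h (Suc N) x = hinge_approx u a h N x"
      using h by (simp add: hinge_approx_Suc grid_Suc)
    then show ?thesis using Suc.IH[of x] 1 by simp
  next
    case 2
    have G: "hinge_approx u a h (Suc N) x = u (grid a h N) + grid_slope u a h N * (x - grid a h N - h)"
      using 2 hinge_approx_beyond[of N x] by (simp add: hinge_approx_Suc)
    have "grid_slope u a h N * (x - grid a h N - h) \<le> 0"
      using 2 grid_slope_nonneg[of N] by (intro mult_nonneg_nonpos) (auto simp: grid_Suc)
    moreover have "u (grid a h N) \<le> u (max x a)" using 2 by (intro monoD[OF mono]) auto
    moreover have "grid_slope u a h N * (-h) \<le> grid_slope u a h N * (x - grid a h N - h)"
      using 2 grid_slope_nonneg[of N] by (intro mult_left_mono) auto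
    moreover have "u (max (x - 2 * h) a) \<le> u (max (grid a h N - h) a)"
      using 2 by (intro monoD[OF mono]) (auto simp: grid_Suc)
    ultimately show ?thesis using G grid_value_minus_slope[of N] by simp
  next
    case 3
    have "hinge_approx u a h (Suc N) x
          = u (grid a h (Suc N)) + grid_slope u a h (Suc N) * (x - grid a h (Suc N) - h)"
      using 3 hinge_approx_beyond[of "Suc N" x] by simp
    also have "\<dots> \<le> u (grid a h (Suc N)) + grid_slope u a h (Suc N) * (x - grid a h (Suc N))"
      using grid_slope_nonneg[of "Suc N"] h by (intro add_left_mono mult_left_mono) auto
    also have "\<dots> \<le> u x" using 3 grid_slope_le_chord[of "Suc N" x] by simp
    also have "u x \<le> u (max x a)" by (intro monoD[OF mono]) simp
    finally show ?thesis using 3 by simp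
  qed
qed

end

lemma hinge_approx_tendsto:
  fixes u :: "real \<Rightarrow> real"
  assumes cvx: "convex_on UNIV u" and mono: "mono u"
  shows "(\<lambda>n. hinge_approx u a (1 / Suc n) ((Suc n)\<^sup>2) x) \<longlonglongrightarrow> u (max x a)"
proof (rule tendsto_sandwich)
  have h: "0 < 1 / real (Suc n)" for n by simp
  note bounds = hinge_approx_bounds[OF cvx mono h]
  obtain n0 :: nat where n0: "x - a \<le> real n0" using real_arch_simple by blast
  have "real ((Suc n)\<^sup>2) * (1 / real (Suc n)) = real (Suc n)" for n
    unfolding of_nat_power by (simp add: power2_eq_square del: of_nat_Suc)
  then have "x \<le> grid a (1 / Suc n) ((Suc n)\<^sup>2)" if "n0 \<le> n" for n
    using n0 that unfolding grid_def by simp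
  then show "\<forall>\<^sub>F n in sequentially. u (max (x - 2 * (1 / Suc n)) a) \<le> hinge_approx u a (1 / Suc n) ((Suc n)\<^sup>2) x"
    using bounds unfolding eventually_sequentially by blast
  show "\<forall>\<^sub>F n in sequentially. hinge_approx u a (1 / Suc n) ((Suc n)\<^sup>2) x \<le> u (max x a)"
    using bounds by simp
  have "(\<lambda>n. max (x - 2 * (1 / real (Suc n))) a) \<longlonglongrightarrow> max (x - 2 * 0) a"
    using LIMSEQ_inverse_real_of_nat by (intro tendsto_intros) (simp add: inverse_eq_divide)
  moreover have "isCont u (max x a)"
    using convex_on_continuous[OF open_UNIV cvx] continuous_on_eq_continuous_at by blast
  ultimately show "(\<lambda>n. u (max (x - 2 * (1 / Suc n)) a)) \<longlonglongrightarrow> u (max x a)"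
    using isCont_tendsto_compose by fastforce
qed simp

section \<open>The stop-loss order\<close>

definition stop_loss_le :: "'a measure \<Rightarrow> ('a \<Rightarrow> real) \<Rightarrow> ('a \<Rightarrow> real) \<Rightarrow> bool" where
  "stop_loss_le M X Y \<longleftrightarrow> (\<forall>w.
     conv_le (enn2ereal (\<integral>\<^sup>+\<omega>. ennreal (max (X \<omega> - w) 0) \<partial>M))
             (enn2ereal (\<integral>\<^sup>+\<omega>. ennreal (max (Y \<omega> - w) 0) \<partial>M)))"

lemma conv_le_enn2ereal: "conv_le (enn2ereal a) (enn2ereal b) \<longleftrightarrow> a = \<top> \<or> a \<le> b"
proof -
  have "enn2ereal b \<noteq> -\<infinity>" using enn2ereal_nonneg[of b] by auto
  then show ?thesis unfolding conv_le_def by (simp add: less_eq_ennreal.rep_eq)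
qed

lemma stop_loss_le_uminus_iff:
  "stop_loss_le M (\<lambda>\<omega>. - X \<omega>) (\<lambda>\<omega>. - Y \<omega>) \<longleftrightarrow>
   (\<forall>w. conv_le (enn2ereal (\<integral>\<^sup>+\<omega>. ennreal (max (- (X \<omega> - w)) 0) \<partial>M))
               (enn2ereal (\<integral>\<^sup>+\<omega>. ennreal (max (- (Y \<omega> - w)) 0) \<partial>M)))"
  unfolding stop_loss_le_def
proof (intro iffI allI)
  fix w
  assume "\<forall>w. conv_le (enn2ereal (\<integral>\<^sup>+\<omega>. ennreal (max (- X \<omega> - w) 0) \<partial>M))
                     (enn2ereal (\<integral>\<^sup>+\<omega>. ennreal (max (- Y \<omega> - w) 0) \<partial>M))"
  from this[rule_format, of "- w"]
  show "conv_le (enn2ereal (\<integral>\<^sup>+\<omega>. ennreal (max (- (X \<omega> - w)) 0) \<partial>M))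
                (enn2ereal (\<integral>\<^sup>+\<omega>. ennreal (max (- (Y \<omega> - w)) 0) \<partial>M))" by simp
next
  fix w
  assume "\<forall>w. conv_le (enn2ereal (\<integral>\<^sup>+\<omega>. ennreal (max (- (X \<omega> - w)) 0) \<partial>M))
                     (enn2ereal (\<integral>\<^sup>+\<omega>. ennreal (max (- (Y \<omega> - w)) 0) \<partial>M))"
  from this[rule_format, of "- w"]
  show "conv_le (enn2ereal (\<integral>\<^sup>+\<omega>. ennreal (max (- X \<omega> - w) 0) \<partial>M))
                (enn2ereal (\<integral>\<^sup>+\<omega>. ennreal (max (- Y \<omega> - w) 0) \<partial>M))" by simp
qed

lemma stop_loss_le_integral_le:
  assumes "stop_loss_le M X Y"
    and "integrable M (\<lambda>\<omega>. max (X \<omega> - w) 0)" "integrable M (\<lambda>\<omega>. max (Y \<omega> - w) 0)"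
  shows "(\<integral>\<omega>. max (X \<omega> - w) 0 \<partial>M) \<le> (\<integral>\<omega>. max (Y \<omega> - w) 0 \<partial>M)"
proof -
  have "(\<integral>\<^sup>+\<omega>. ennreal (max (Z \<omega> - w) 0) \<partial>M) = ennreal (\<integral>\<omega>. max (Z \<omega> - w) 0 \<partial>M)"
    if "integrable M (\<lambda>\<omega>. max (Z \<omega> - w) 0)" for Z
    using that by (intro nn_integral_eq_integral) auto
  moreover have "conv_le (enn2ereal (\<integral>\<^sup>+\<omega>. ennreal (max (X \<omega> - w) 0) \<partial>M))
                         (enn2ereal (\<integral>\<^sup>+\<omega>. ennreal (max (Y \<omega> - w) 0) \<partial>M))"
    using assms(1) unfolding stop_loss_le_def by blast
  ultimately have "ennreal (\<integral>\<omega>. max (X \<omega> - w) 0 \<partial>M) \<le> ennreal (\<integral>\<omega>. max (Y \<omega> - w) 0 \<partial>M)"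
    using assms(2,3) unfolding conv_le_enn2ereal by auto
  moreover have "0 \<le> (\<integral>\<omega>. max (Y \<omega> - w) 0 \<partial>M)" by (intro integral_nonneg_AE) auto
  ultimately show ?thesis by (simp add: ennreal_le_iff)
qed

lemma integrable_comp_max_min:
  fixes u :: "real \<Rightarrow> real"
  assumes "finite_measure M" "integrable M (\<lambda>\<omega>. u (Z \<omega>))"
    and [measurable]: "u \<in> borel_measurable borel" "Z \<in> borel_measurable M"
  shows "integrable M (\<lambda>\<omega>. u (max (Z \<omega>) a))" and "integrable M (\<lambda>\<omega>. u (min (Z \<omega>) a))"
proof -
  interpret finite_measure M by fact
  have bound: "integrable M (\<lambda>\<omega>. \<bar>u (Z \<omega>)\<bar> + \<bar>u a\<bar>)" using assms(2) by auto
  have "norm (u (max (Z \<omega>) a)) \<le> norm (\<bar>u (Z \<omega>)\<bar> + \<bar>u a\<bar>)"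
    "norm (u (min (Z \<omega>) a)) \<le> norm (\<bar>u (Z \<omega>)\<bar> + \<bar>u a\<bar>)" for \<omega>
    by (cases "Z \<omega> \<le> a"; simp add: max_def min_def)+
  then show "integrable M (\<lambda>\<omega>. u (max (Z \<omega>) a))" "integrable M (\<lambda>\<omega>. u (min (Z \<omega>) a))"
    by (auto intro!: Bochner_Integration.integrable_bound[OF bound _ AE_I2])
qed

lemma integral_hinge_approx:
  assumes "prob_space M" "\<And>t. integrable M (\<lambda>\<omega>. max (Z \<omega> - t) 0)"
  shows "(\<integral>\<omega>. hinge_approx u a h N (Z \<omega>) \<partial>M) = u a +
           (\<Sum>i\<in>{1..N}. (grid_slope u a h i - grid_slope u a h (i - 1)) * (\<integral>\<omega>. max (Z \<omega> - grid a h i) 0 \<partial>M))"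
proof -
  interpret prob_space M by fact
  let ?c = "\<lambda>i. grid_slope u a h i - grid_slope u a h (i - 1)"
  have "(\<integral>\<omega>. hinge_approx u a h N (Z \<omega>) \<partial>M) =
        (\<integral>\<omega>. u a \<partial>M) + (\<integral>\<omega>. (\<Sum>i\<in>{1..N}. ?c i * max (Z \<omega> - grid a h i) 0) \<partial>M)"
    unfolding hinge_approx_def using assms(2) by (intro Bochner_Integration.integral_add) auto
  also have "\<dots> = u a + (\<Sum>i\<in>{1..N}. ?c i * (\<integral>\<omega>. max (Z \<omega> - grid a h i) 0 \<partial>M))"
    using assms(2) by (simp add: Bochner_Integration.integral_sum prob_space)
  finally show ?thesis .
qed

lemma tendsto_integral_hinge_approx:
  fixes u :: "real \<Rightarrow> real"
  assumes "prob_space M" "convex_on UNIV u" "mono u"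
    and [measurable]: "Z \<in> borel_measurable M" and uZ: "integrable M (\<lambda>\<omega>. u (Z \<omega>))"
  shows "(\<lambda>n. \<integral>\<omega>. hinge_approx u a (1 / Suc n) ((Suc n)\<^sup>2) (Z \<omega>) \<partial>M) \<longlonglongrightarrow> (\<integral>\<omega>. u (max (Z \<omega>) a) \<partial>M)"
proof (rule integral_dominated_convergence[where w="\<lambda>\<omega>. \<bar>u a\<bar> + \<bar>u (max (Z \<omega>) a)\<bar>"])
  interpret prob_space M by fact
  have [measurable]: "u \<in> borel_measurable borel"
    by (rule convex_on_UNIV_borel_measurable) fact
  show "(\<lambda>\<omega>. u (max (Z \<omega>) a)) \<in> borel_measurable M"
    "\<And>n. (\<lambda>\<omega>. hinge_approx u a (1 / Suc n) ((Suc n)\<^sup>2) (Z \<omega>)) \<in> borel_measurable M"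
    by measurable
  show "integrable M (\<lambda>\<omega>. \<bar>u a\<bar> + \<bar>u (max (Z \<omega>) a)\<bar>)"
    using integrable_comp_max_min(1)[of M u Z, OF finite_measure_axioms uZ] by auto
  show "AE \<omega> in M. (\<lambda>n. hinge_approx u a (1 / Suc n) ((Suc n)\<^sup>2) (Z \<omega>)) \<longlonglongrightarrow> u (max (Z \<omega>) a)"
    using hinge_approx_tendsto[OF assms(2,3)] by simp
  have "0 < 1 / real (Suc n)" for n by simp
  note bounds = hinge_approx_ge[OF assms(2,3) this] hinge_approx_bounds[OF assms(2,3) this]
  show "AE \<omega> in M. norm (hinge_approx u a (1 / Suc n) ((Suc n)\<^sup>2) (Z \<omega>)) \<le> \<bar>u a\<bar> + \<bar>u (max (Z \<omega>) a)\<bar>" for n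
  proof (intro AE_I2)
    fix \<omega>
    have "u a \<le> hinge_approx u a (1 / Suc n) ((Suc n)\<^sup>2) (Z \<omega>)"
      "hinge_approx u a (1 / Suc n) ((Suc n)\<^sup>2) (Z \<omega>) \<le> u (max (Z \<omega>) a)"
      using bounds by blast+
    then show "norm (hinge_approx u a (1 / Suc n) ((Suc n)\<^sup>2) (Z \<omega>)) \<le> \<bar>u a\<bar> + \<bar>u (max (Z \<omega>) a)\<bar>"
      by auto
  qed
qed

text \<open>The hinge approximants are nonnegative combinations of hinges plus a constant, so the
  hypothesis passes to them, and then to their limit \<open>u (max x a)\<close>.\<close>

lemma integral_max_le_of_hinge_le:
  fixes u :: "real \<Rightarrow> real"
  assumes P: "prob_space M" and mX: "X \<in> borel_measurable M" and mY: "Y \<in> borel_measurable M"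
    and cvx: "convex_on UNIV u" and mono: "mono u"
    and uX: "integrable M (\<lambda>\<omega>. u (X \<omega>))" and uY: "integrable M (\<lambda>\<omega>. u (Y \<omega>))"
    and iX: "\<And>t. integrable M (\<lambda>\<omega>. max (X \<omega> - t) 0)"
    and iY: "\<And>t. integrable M (\<lambda>\<omega>. max (Y \<omega> - t) 0)"
    and le: "\<And>t. (\<integral>\<omega>. max (X \<omega> - t) 0 \<partial>M) \<le> (\<integral>\<omega>. max (Y \<omega> - t) 0 \<partial>M)"
  shows "(\<integral>\<omega>. u (max (X \<omega>) a) \<partial>M) \<le> (\<integral>\<omega>. u (max (Y \<omega>) a) \<partial>M)"
proof (rule LIMSEQ_le)
  show "(\<lambda>n. \<integral>\<omega>. hinge_approx u a (1 / Suc n) ((Suc n)\<^sup>2) (X \<omega>) \<partial>M) \<longlonglongrightarrow> (\<integral>\<omega>. u (max (X \<omega>) a) \<partial>M)"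
    by (rule tendsto_integral_hinge_approx[OF P cvx mono mX uX])
  show "(\<lambda>n. \<integral>\<omega>. hinge_approx u a (1 / Suc n) ((Suc n)\<^sup>2) (Y \<omega>) \<partial>M) \<longlonglongrightarrow> (\<integral>\<omega>. u (max (Y \<omega>) a) \<partial>M)"
    by (rule tendsto_integral_hinge_approx[OF P cvx mono mY uY])
  have "0 < 1 / real (Suc n)" for n by simp
  note slope_mono = grid_slope_mono[OF cvx mono this]
  show "\<exists>N. \<forall>n\<ge>N. (\<integral>\<omega>. hinge_approx u a (1 / Suc n) ((Suc n)\<^sup>2) (X \<omega>) \<partial>M)
                  \<le> (\<integral>\<omega>. hinge_approx u a (1 / Suc n) ((Suc n)\<^sup>2) (Y \<omega>) \<partial>M)"
    unfolding integral_hinge_approx[OF P iX] integral_hinge_approx[OF P iY]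
    using slope_mono le by (intro exI allI impI add_left_mono sum_mono mult_left_mono) auto
qed

lemma tendsto_integral_max_neg_nat:
  fixes u :: "real \<Rightarrow> real"
  assumes "finite_measure M" "mono u"
    and [measurable]: "u \<in> borel_measurable borel" "Z \<in> borel_measurable M"
    and uZ: "integrable M (\<lambda>\<omega>. u (Z \<omega>))"
  shows "(\<lambda>n. \<integral>\<omega>. u (max (Z \<omega>) (- real n)) \<partial>M) \<longlonglongrightarrow> (\<integral>\<omega>. u (Z \<omega>) \<partial>M)"
proof (rule integral_dominated_convergence[where w="\<lambda>\<omega>. \<bar>u (Z \<omega>)\<bar> + \<bar>u 0\<bar>"])
  interpret finite_measure M by fact
  show "(\<lambda>\<omega>. u (Z \<omega>)) \<in> borel_measurable M"
    "\<And>n. (\<lambda>\<omega>. u (max (Z \<omega>) (- real n))) \<in> borel_measurable M"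
    by measurable
  show "integrable M (\<lambda>\<omega>. \<bar>u (Z \<omega>)\<bar> + \<bar>u 0\<bar>)" using uZ by auto
  show "AE \<omega> in M. (\<lambda>n. u (max (Z \<omega>) (- real n))) \<longlonglongrightarrow> u (Z \<omega>)"
  proof (intro AE_I2 tendsto_eventually)
    fix \<omega>
    obtain n0 :: nat where "- Z \<omega> \<le> real n0" using real_arch_simple by blast
    then show "\<forall>\<^sub>F n in sequentially. u (max (Z \<omega>) (- real n)) = u (Z \<omega>)"
      unfolding eventually_sequentially by (intro exI[of _ n0]) auto
  qed
  show "AE \<omega> in M. norm (u (max (Z \<omega>) (- real n))) \<le> \<bar>u (Z \<omega>)\<bar> + \<bar>u 0\<bar>" for n
  proof (intro AE_I2)
    fix \<omega>
    have "u (Z \<omega>) \<le> u (max (Z \<omega>) (- real n))" "u (max (Z \<omega>) (- real n)) \<le> u (max (Z \<omega>) 0)"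
      by (auto intro!: monoD[OF \<open>mono u\<close>])
    moreover have "u (max (Z \<omega>) 0) \<le> \<bar>u (Z \<omega>)\<bar> + \<bar>u 0\<bar>" by (auto simp: max_def)
    ultimately show "norm (u (max (Z \<omega>) (- real n))) \<le> \<bar>u (Z \<omega>)\<bar> + \<bar>u 0\<bar>"
      using abs_ge_minus_self[of "u (Z \<omega>)"] abs_ge_zero[of "u 0"] unfolding real_norm_def abs_le_iff by linarith
  qed
qed

text \<open>A nonconstant nondecreasing convex \<open>u\<close> grows at least linearly, so integrability of
  \<open>u (X \<omega>)\<close> makes all hinges of \<open>X\<close> integrable; the truncation level \<open>a\<close> is then sent to
  \<open>-\<infinity>\<close>.\<close>

lemma integral_mono_convex_le_of_stop_loss_le:
  fixes u :: "real \<Rightarrow> real"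
  assumes P: "prob_space M" and [measurable]: "X \<in> borel_measurable M" "Y \<in> borel_measurable M"
    and sl: "stop_loss_le M X Y" and cvx: "convex_on UNIV u" and mono: "mono u"
    and uX: "integrable M (\<lambda>\<omega>. u (X \<omega>))" and uY: "integrable M (\<lambda>\<omega>. u (Y \<omega>))"
  shows "(\<integral>\<omega>. u (X \<omega>) \<partial>M) \<le> (\<integral>\<omega>. u (Y \<omega>) \<partial>M)"
proof (cases "\<exists>x0 x1. x0 < x1 \<and> u x0 < u x1")
  case False
  then have "u x = u 0" for x
    using monoD[OF mono, of x 0] monoD[OF mono, of 0 x] by (cases x "0::real" rule: linorder_cases) force+
  then have "u (X \<omega>) = u (Y \<omega>)" for \<omega> by metis
  then show ?thesis by simp
next
  case True
  interpret prob_space M by fact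
  have [measurable]: "u \<in> borel_measurable borel" by (rule convex_on_UNIV_borel_measurable[OF cvx])
  obtain x0 x1 where x01: "x0 < x1" "u x0 < u x1" using True by blast
  define c where "c = (u x1 - u x0) / (x1 - x0)"
  have "0 < c" unfolding c_def using x01 by simp
  have hinge: "integrable M (\<lambda>\<omega>. max (Z \<omega> - t) 0)"
    if [measurable]: "Z \<in> borel_measurable M" and uZ: "integrable M (\<lambda>\<omega>. u (Z \<omega>))" for Z t
  proof (rule Bochner_Integration.integrable_bound[OF _ _ AE_I2])
    show "integrable M (\<lambda>\<omega>. (\<bar>u (Z \<omega>)\<bar> + \<bar>u x1\<bar>) / c + \<bar>x1 - t\<bar>)" using uZ by auto
    show "(\<lambda>\<omega>. max (Z \<omega> - t) 0) \<in> borel_measurable M" by measurable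
    show "norm (max (Z \<omega> - t) 0) \<le> norm ((\<bar>u (Z \<omega>)\<bar> + \<bar>u x1\<bar>) / c + \<bar>x1 - t\<bar>)" for \<omega>
      using hinge_le_convex[OF cvx x01, of "Z \<omega>" t, folded c_def] \<open>0 < c\<close> by auto
  qed
  have "(\<integral>\<omega>. u (max (X \<omega>) (- real n)) \<partial>M) \<le> (\<integral>\<omega>. u (max (Y \<omega>) (- real n)) \<partial>M)" for n
    using hinge[OF _ uX] hinge[OF _ uY] stop_loss_le_integral_le[OF sl]
    by (intro integral_max_le_of_hinge_le[OF P _ _ cvx mono uX uY]) auto
  then show ?thesis
    using tendsto_integral_max_neg_nat[OF finite_measure_axioms mono _ _ uX]
      tendsto_integral_max_neg_nat[OF finite_measure_axioms mono _ _ uY]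
    by (intro LIMSEQ_le) auto
qed

lemma integral_antimono_convex_le_of_stop_loss_le:
  fixes u :: "real \<Rightarrow> real"
  assumes P: "prob_space M" and [measurable]: "X \<in> borel_measurable M" "Y \<in> borel_measurable M"
    and sl: "stop_loss_le M (\<lambda>\<omega>. - X \<omega>) (\<lambda>\<omega>. - Y \<omega>)"
    and cvx: "convex_on UNIV u" and anti: "antimono u"
    and "integrable M (\<lambda>\<omega>. u (X \<omega>))" "integrable M (\<lambda>\<omega>. u (Y \<omega>))"
  shows "(\<integral>\<omega>. u (X \<omega>) \<partial>M) \<le> (\<integral>\<omega>. u (Y \<omega>) \<partial>M)"
proof -
  have "mono (\<lambda>x. u (- x))" by (auto intro!: monoI antimonoD[OF anti])
  then show ?thesis
    using integral_mono_convex_le_of_stop_loss_le[OF P _ _ sl convex_on_reflect[OF cvx]] assms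
    by simp
qed

lemma integral_convex_le_of_stop_loss_le:
  fixes u :: "real \<Rightarrow> real"
  assumes P: "prob_space M" and [measurable]: "X \<in> borel_measurable M" "Y \<in> borel_measurable M"
    and sl: "stop_loss_le M X Y" and sl': "stop_loss_le M (\<lambda>\<omega>. - X \<omega>) (\<lambda>\<omega>. - Y \<omega>)"
    and cvx: "convex_on UNIV u"
    and uX: "integrable M (\<lambda>\<omega>. u (X \<omega>))" and uY: "integrable M (\<lambda>\<omega>. u (Y \<omega>))"
  shows "(\<integral>\<omega>. u (X \<omega>) \<partial>M) \<le> (\<integral>\<omega>. u (Y \<omega>) \<partial>M)"
proof -
  interpret prob_space M by fact
  have [measurable]: "u \<in> borel_measurable borel" by (rule convex_on_UNIV_borel_measurable[OF cvx])
  consider "mono u" | "antimono u" | "\<not> mono u" "\<not> antimono u" by blast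
  then show ?thesis
  proof cases
    case 1
    from integral_mono_convex_le_of_stop_loss_le[OF P _ _ sl cvx 1 uX uY] show ?thesis by simp
  next
    case 2
    from integral_antimono_convex_le_of_stop_loss_le[OF P _ _ sl' cvx 2 uX uY] show ?thesis by simp
  next
    case 3
    then obtain m where min: "\<And>z. u m \<le> u z" using convex_on_attains_min[OF cvx] by blast
    note int = integrable_comp_max_min[of M u, OF finite_measure_axioms, where a=m]
    have split: "(\<integral>\<omega>. u (Z \<omega>) \<partial>M) = (\<integral>\<omega>. u (max (Z \<omega>) m) \<partial>M) + (\<integral>\<omega>. u (min (Z \<omega>) m) \<partial>M) - u m"
      if [measurable]: "Z \<in> borel_measurable M" and uZ: "integrable M (\<lambda>\<omega>. u (Z \<omega>))" for Z
    proof -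
      have "u (Z \<omega>) = u (max (Z \<omega>) m) + u (min (Z \<omega>) m) - u m" for \<omega>
        by (cases "Z \<omega> \<le> m") (auto simp: max_def min_def)
      then show ?thesis
        using int[OF uZ] by (simp add: Bochner_Integration.integral_diff Bochner_Integration.integral_add prob_space)
    qed
    have "(\<integral>\<omega>. u (max (X \<omega>) m) \<partial>M) \<le> (\<integral>\<omega>. u (max (Y \<omega>) m) \<partial>M)"
      using int[OF uX] int[OF uY] convex_on_max_at_min[OF cvx min]
      by (intro integral_mono_convex_le_of_stop_loss_le[OF P _ _ sl, where u="\<lambda>x. u (max x m)"]) auto
    moreover have "(\<integral>\<omega>. u (min (X \<omega>) m) \<partial>M) \<le> (\<integral>\<omega>. u (min (Y \<omega>) m) \<partial>M)"
      using int[OF uX] int[OF uY] convex_on_min_at_min[OF cvx min]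
      by (intro integral_antimono_convex_le_of_stop_loss_le[OF P _ _ sl', where u="\<lambda>x. u (min x m)"]) auto
    ultimately show ?thesis using split[OF _ uX] split[OF _ uY] by simp
  qed
qed

lemma dagger_cx_nn_integral_le:
  fixes f :: "real \<Rightarrow> real"
  assumes P: "prob_space M" and [measurable]: "X \<in> borel_measurable M" "Y \<in> borel_measurable M"
    and D: "dagger_cx M X Y" and cvx: "convex_on UNIV f" and nn: "\<And>x. 0 \<le> f x"
  shows "conv_le (enn2ereal (\<integral>\<^sup>+\<omega>. ennreal (f (X \<omega>)) \<partial>M)) (enn2ereal (\<integral>\<^sup>+\<omega>. ennreal (f (Y \<omega>)) \<partial>M))"
  unfolding conv_le_enn2ereal
proof (cases "(\<integral>\<^sup>+\<omega>. ennreal (f (X \<omega>)) \<partial>M) < \<top> \<and> (\<integral>\<^sup>+\<omega>. ennreal (f (Y \<omega>)) \<partial>M) < \<top>")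
  case True
  have [measurable]: "f \<in> borel_measurable borel" by (rule convex_on_UNIV_borel_measurable[OF cvx])
  have iX: "integrable M (\<lambda>\<omega>. f (X \<omega>))" and iY: "integrable M (\<lambda>\<omega>. f (Y \<omega>))"
    using True nn by (auto intro!: integrableI_nonneg)
  then have "(\<integral>\<omega>. f (X \<omega>) \<partial>M) \<le> (\<integral>\<omega>. f (Y \<omega>) \<partial>M)"
    using D cvx unfolding dagger_cx_def by blast
  then show "(\<integral>\<^sup>+\<omega>. ennreal (f (X \<omega>)) \<partial>M) = \<top> \<or>
      (\<integral>\<^sup>+\<omega>. ennreal (f (X \<omega>)) \<partial>M) \<le> (\<integral>\<^sup>+\<omega>. ennreal (f (Y \<omega>)) \<partial>M)"
    using iX iY nn by (simp add: nn_integral_eq_integral ennreal_leI)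
qed (auto simp: less_top[symmetric])

lemma dagger_cx_iff_stop_loss_le:
  assumes P: "prob_space M" and [measurable]: "X \<in> borel_measurable M" "Y \<in> borel_measurable M"
  shows "dagger_cx M X Y \<longleftrightarrow> stop_loss_le M X Y \<and> stop_loss_le M (\<lambda>\<omega>. - X \<omega>) (\<lambda>\<omega>. - Y \<omega>)"
proof
  assume D: "dagger_cx M X Y"
  show "stop_loss_le M X Y \<and> stop_loss_le M (\<lambda>\<omega>. - X \<omega>) (\<lambda>\<omega>. - Y \<omega>)"
    unfolding stop_loss_le_def
    using dagger_cx_nn_integral_le[OF P _ _ D convex_on_hinge] 
      dagger_cx_nn_integral_le[OF P _ _ D convex_on_hinge_reflect] by simp
next
  assume "stop_loss_le M X Y \<and> stop_loss_le M (\<lambda>\<omega>. - X \<omega>) (\<lambda>\<omega>. - Y \<omega>)"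
  then show "dagger_cx M X Y"
    unfolding dagger_cx_def using integral_convex_le_of_stop_loss_le[OF P] by auto
qed

section \<open>Tail integrals of a monotone function on the unit interval\<close>

text \<open>Since \<open>ennreal\<close> truncates at \<open>0\<close>, \<open>excess q w\<close> and \<open>shortfall q w\<close> are the integrals of
  \<open>(q t - w)\<^sub>+\<close> and \<open>(q t - w)\<^sub>-\<close> over \<open>(0, 1)\<close>.\<close>

definition excess :: "(real \<Rightarrow> real) \<Rightarrow> real \<Rightarrow> ennreal" where
  "excess q w = (\<integral>\<^sup>+t. ennreal (q t - w) * indicator {0<..<1} t \<partial>lborel)"

definition shortfall :: "(real \<Rightarrow> real) \<Rightarrow> real \<Rightarrow> ennreal" where
  "shortfall q w = (\<integral>\<^sup>+t. ennreal (w - q t) * indicator {0<..<1} t \<partial>lborel)"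

definition upper_tail :: "(real \<Rightarrow> real) \<Rightarrow> real \<Rightarrow> ereal" where
  "upper_tail q p = ext_integral lborel (\<lambda>t. indicator {p<..<1} t * q t)"

definition lower_tail :: "(real \<Rightarrow> real) \<Rightarrow> real \<Rightarrow> ereal" where
  "lower_tail q p = ext_integral lborel (\<lambda>t. indicator {0<..<p} t * q t)"

lemma mono_on_level_crossing:
  fixes q :: "real \<Rightarrow> real"
  assumes mono: "mono_on {0<..<1} q"
  obtains r where "0 \<le> r" "r \<le> 1" "\<And>t. 0 < t \<Longrightarrow> t < r \<Longrightarrow> q t \<le> w"
    "\<And>t. r < t \<Longrightarrow> t < 1 \<Longrightarrow> w < q t"
proof
  define S where "S = {t\<in>{0<..<1}. w < q t} \<union> {1}"
  have bdd: "bdd_below S" unfolding S_def by (rule bdd_belowI[of _ 0]) auto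
  show "0 \<le> Inf S" "Inf S \<le> 1"
    using bdd by (auto intro!: cInf_greatest cInf_lower simp: S_def)
  show "q t \<le> w" if "0 < t" "t < Inf S" for t
    using that cInf_lower[OF _ bdd, of t] \<open>Inf S \<le> 1\<close> by (force simp: S_def)
  show "w < q t" if lt: "Inf S < t" "t < 1" for t
  proof -
    obtain s where "s \<in> S" "s < t" using cInf_lessD[OF _ lt(1)] by (auto simp: S_def)
    then have "s \<in> {0<..<1}" "w < q s" using lt by (auto simp: S_def)
    moreover have "q s \<le> q t" using \<open>s < t\<close> \<open>s \<in> {0<..<1}\<close> lt by (intro mono_onD[OF mono]) auto
    ultimately show ?thesis by simp
  qed
qed

lemma nn_integral_Ioo_eq_SUP:
  fixes f :: "real \<Rightarrow> ennreal"
  assumes [measurable]: "f \<in> borel_measurable borel" and "r < b"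
  shows "(\<integral>\<^sup>+t. f t * indicator {r<..<b} t \<partial>lborel) = (SUP p\<in>{r<..<b}. \<integral>\<^sup>+t. f t * indicator {p<..<b} t \<partial>lborel)"
proof (rule antisym)
  obtain P :: "nat \<Rightarrow> real" where P: "decseq P" "\<And>i. r < P i" "\<And>i. P i < b" "P \<longlonglongrightarrow> r"
    using ereal_decseq_approx[of r b] \<open>r < b\<close> by (metis ereal_less(2) less_ereal.simps(1) lim_ereal)
  have "f t * indicator {r<..<b} t = (SUP i. f t * indicator {P i<..<b} t)" for t
  proof (cases "t \<in> {r<..<b}")
    case True
    then obtain i where "P i < t"
      using order_tendstoD(2)[OF P(4), of t] by (auto dest: eventually_happens)
    then show ?thesis using True P(2)
      by (intro antisym SUP_upper2[of i] SUP_least) (auto simp: indicator_def)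
  next
    case False
    then have "t \<notin> {P i<..<b}" for i using P(2)[of i] by auto
    then show ?thesis using False by simp
  qed
  moreover have "incseq (\<lambda>i t. f t * indicator {P i<..<b} t)"
  proof (intro incseq_SucI le_funI mult_left_mono)
    fix i t
    show "indicator {P i<..<b} t \<le> (indicator {P (Suc i)<..<b} t :: ennreal)"
      using decseq_SucD[OF P(1), of i] by (auto simp: indicator_def)
  qed simp
  ultimately have "(\<integral>\<^sup>+t. f t * indicator {r<..<b} t \<partial>lborel) = (SUP i. \<integral>\<^sup>+t. f t * indicator {P i<..<b} t \<partial>lborel)"
    by (simp add: nn_integral_monotone_convergence_SUP)
  also have "\<dots> \<le> (SUP p\<in>{r<..<b}. \<integral>\<^sup>+t. f t * indicator {p<..<b} t \<partial>lborel)"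
    using P(2,3) by (intro SUP_least SUP_upper) auto
  finally show "(\<integral>\<^sup>+t. f t * indicator {r<..<b} t \<partial>lborel) \<le> \<dots>" .
  show "(SUP p\<in>{r<..<b}. \<integral>\<^sup>+t. f t * indicator {p<..<b} t \<partial>lborel) \<le> (\<integral>\<^sup>+t. f t * indicator {r<..<b} t \<partial>lborel)"
    by (intro SUP_least nn_integral_mono mult_left_mono) (auto simp: indicator_def)
qed

lemma ennreal_le_plus_abs: "ennreal (x - w) \<le> ennreal x + ennreal \<bar>w\<bar>"
proof -
  have "ennreal (x - w) \<le> ennreal (max x 0 + \<bar>w\<bar>)" by (intro ennreal_leI) auto
  also have "\<dots> = ennreal x + ennreal \<bar>w\<bar>"
    by (subst ennreal_plus) (auto simp: ennreal_max_0 max.commute)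
  finally show ?thesis .
qed

lemma nn_integral_tail_excess_le:
  fixes q :: "real \<Rightarrow> real"
  assumes p: "0 \<le> p" "p < 1" and above: "\<And>t. p < t \<Longrightarrow> t < 1 \<Longrightarrow> w \<le> q t"
    and int: "integrable lborel (\<lambda>t. indicator {p<..<1} t * q t)"
    and le: "(\<integral>t. indicator {p<..<1} t * q t \<partial>lborel) \<le> (1 - p) * w + c"
  shows "(\<integral>\<^sup>+t. ennreal (q t - w) * indicator {p<..<1} t \<partial>lborel) \<le> ennreal c"
proof -
  have "ennreal (q t - w) * indicator {p<..<1} t = ennreal (indicator {p<..<1} t * (q t - w))" for t
    by (auto simp: indicator_def)
  moreover have "integrable lborel (\<lambda>t. indicator {p<..<1} t * (q t - w))"
    using int p by (simp add: right_diff_distrib integrable_indicator_iff emeasure_lborel_Ioo)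
  then have "(\<integral>\<^sup>+t. ennreal (indicator {p<..<1} t * (q t - w)) \<partial>lborel)
             = ennreal (\<integral>t. indicator {p<..<1} t * (q t - w) \<partial>lborel)"
    using above by (intro nn_integral_eq_integral AE_I2) (auto simp: indicator_def)
  moreover have "(\<integral>t. indicator {p<..<1} t * (q t - w) \<partial>lborel) \<le> c"
    using int le p by (simp add: right_diff_distrib Bochner_Integration.integral_diff
        integrable_indicator_iff emeasure_lborel_Ioo)
  ultimately show ?thesis by (simp add: ennreal_leI)
qed

context
  fixes q :: "real \<Rightarrow> real"
  assumes mono: "mono_on {0<..<1} q"
begin

lemma borel_measurable_indicator_mult:
  assumes "A \<subseteq> {0<..<1}" "A \<in> sets borel"
  shows "(\<lambda>t. indicator A t * q t) \<in> borel_measurable borel"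
proof -
  have "(\<lambda>t. indicator {0<..<1} t *\<^sub>R q t) \<in> borel_measurable borel"
    using borel_measurable_mono_on_fnc[OF mono] by (subst (asm) borel_measurable_restrict_space_iff) auto
  then have "(\<lambda>t. indicator A t * (indicator {0<..<1} t * q t)) \<in> borel_measurable borel"
    using assms(2) by simp
  moreover have "indicator A t * (indicator {0<..<1} t * q t) = indicator A t * q t" for t
    using assms(1) by (auto simp: indicator_def)
  ultimately show ?thesis by simp
qed

lemma borel_measurable_comp_indicator:
  fixes g :: "real \<Rightarrow> ennreal"
  assumes [measurable]: "g \<in> borel_measurable borel"
  shows "(\<lambda>t. g (q t) * indicator {0<..<1} t) \<in> borel_measurable borel"
proof -
  have "(\<lambda>t. g (indicator {0<..<1} t * q t) * indicator {0<..<1} t) \<in> borel_measurable borel"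
    using borel_measurable_indicator_mult[of "{0<..<1}"] by measurable
  moreover have "g (indicator {0<..<1} t * q t) * indicator {0<..<1} t = g (q t) * indicator {0<..<1} t" for t
    by (auto simp: indicator_def)
  ultimately show ?thesis by simp
qed

lemma nn_integral_upper_tail_neg_finite:
  assumes "0 < p" "p < 1"
  shows "(\<integral>\<^sup>+t. ennreal (- (indicator {p<..<1} t * q t)) \<partial>lborel) < \<infinity>"
proof -
  have "(\<integral>\<^sup>+t. ennreal (- (indicator {p<..<1} t * q t)) \<partial>lborel)
        \<le> (\<integral>\<^sup>+t. ennreal \<bar>q p\<bar> * indicator {p<..<1} t \<partial>lborel)"
  proof (rule nn_integral_mono)
    fix t
    show "ennreal (- (indicator {p<..<1} t * q t)) \<le> ennreal \<bar>q p\<bar> * indicator {p<..<1} t"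
    proof (cases "t \<in> {p<..<1}")
      case True
      then have "q p \<le> q t" using assms by (intro mono_onD[OF mono]) auto
      then show ?thesis using True by (auto intro!: ennreal_leI)
    qed simp
  qed
  also have "\<dots> < \<infinity>"
    using assms by (simp add: nn_integral_cmult_indicator ennreal_mult_less_top)
  finally show ?thesis .
qed

lemma upper_tail_eq:
  assumes "0 < p" "p < 1"
  shows "upper_tail q p = (if integrable lborel (\<lambda>t. indicator {p<..<1} t * q t)
                           then ereal (\<integral>t. indicator {p<..<1} t * q t \<partial>lborel) else \<infinity>)"
proof -
  let ?f = "\<lambda>t. indicator {p<..<1} t * q t"
  have meas: "?f \<in> borel_measurable borel"
    using assms by (intro borel_measurable_indicator_mult) auto
  note neg = nn_integral_upper_tail_neg_finite[OF assms]
  show ?thesis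
  proof (cases "integrable lborel ?f")
    case True
    then obtain r s where "0 \<le> r" "0 \<le> s" "(\<integral>\<^sup>+x. ennreal (?f x) \<partial>lborel) = ennreal r"
      "(\<integral>\<^sup>+x. ennreal (- ?f x) \<partial>lborel) = ennreal s" "integral\<^sup>L lborel ?f = r - s"
      by (rule integrableE) blast
    then show ?thesis using True
      unfolding upper_tail_def ext_integral_def by (simp add: enn2ereal_ennreal)
  next
    case False
    then have "(\<integral>\<^sup>+x. ennreal (?f x) \<partial>lborel) = \<infinity>"
      using meas neg unfolding real_integrable_def by (auto simp: top_unique)
    then show ?thesis using False neg
      unfolding upper_tail_def ext_integral_def
      by (cases "(\<integral>\<^sup>+x. ennreal (- ?f x) \<partial>lborel)") (auto simp: enn2ereal_ennreal)
  qed
qed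

lemma integrable_upper_tail_of_excess_finite:
  assumes "0 < p" "p < 1" "excess q w < \<top>"
  shows "integrable lborel (\<lambda>t. indicator {p<..<1} t * q t)"
proof -
  let ?f = "\<lambda>t. indicator {p<..<1} t * q t"
  have "(\<integral>\<^sup>+t. ennreal (?f t) \<partial>lborel) \<le>
        (\<integral>\<^sup>+t. ennreal (q t - w) * indicator {0<..<1} t + ennreal \<bar>w\<bar> * indicator {p<..<1} t \<partial>lborel)"
  proof (rule nn_integral_mono)
    fix t
    have "ennreal (q t) \<le> ennreal (q t - w) + ennreal \<bar>w\<bar>"
      using ennreal_le_plus_abs[of "q t - w" "- w"] by simp
    then show "ennreal (?f t) \<le> ennreal (q t - w) * indicator {0<..<1} t + ennreal \<bar>w\<bar> * indicator {p<..<1} t"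
      using assms by (auto simp: indicator_def)
  qed
  also have "\<dots> = excess q w + ennreal \<bar>w\<bar> * ennreal (1 - p)"
    unfolding excess_def using assms borel_measurable_comp_indicator[of "\<lambda>x. ennreal (x - w)"]
    by (subst nn_integral_add) (auto simp: nn_integral_cmult_indicator)
  also have "\<dots> < \<infinity>" using assms(3) by (simp add: ennreal_mult_less_top)
  finally show ?thesis
    unfolding real_integrable_def using assms nn_integral_upper_tail_neg_finite[OF assms(1,2)]
    by (auto intro: borel_measurable_indicator_mult)
qed

lemma excess_finite_of_integrable_upper_tail:
  assumes "0 < p" "p < 1" and int: "integrable lborel (\<lambda>t. indicator {p<..<1} t * q t)"
  shows "excess q w < \<top>"
proof -
  let ?f = "\<lambda>t. indicator {p<..<1} t * q t"
  have [measurable]: "?f \<in> borel_measurable borel"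
    using assms by (intro borel_measurable_indicator_mult) auto
  have "excess q w \<le> (\<integral>\<^sup>+t. ennreal (q p - w) * indicator {0<..p} t +
          (ennreal (?f t) + ennreal \<bar>w\<bar> * indicator {p<..<1} t) \<partial>lborel)"
    unfolding excess_def
  proof (rule nn_integral_mono)
    fix t
    have "q t \<le> q p" if "t \<in> {0<..p}" using that assms by (intro mono_onD[OF mono]) auto
    then show "ennreal (q t - w) * indicator {0<..<1} t \<le> ennreal (q p - w) * indicator {0<..p} t +
          (ennreal (?f t) + ennreal \<bar>w\<bar> * indicator {p<..<1} t)"
      using ennreal_le_plus_abs[of "q t" w] by (auto simp: indicator_def intro: ennreal_leI)
  qed
  also have "\<dots> = ennreal (q p - w) * ennreal p + ((\<integral>\<^sup>+t. ennreal (?f t) \<partial>lborel) + ennreal \<bar>w\<bar> * ennreal (1 - p))"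
    using assms by (subst nn_integral_add, simp, measurable, subst nn_integral_add)
      (auto simp: nn_integral_cmult_indicator)
  also have "\<dots> < \<infinity>"
    using int unfolding real_integrable_def by (simp add: ennreal_mult_less_top less_top)
  finally show ?thesis by simp
qed

lemma integral_excess:
  assumes "excess q v < \<top>"
  shows "integrable lborel (\<lambda>t. indicator {0<..<1} t * max (q t - v) 0)"
    and "(\<integral>t. indicator {0<..<1} t * max (q t - v) 0 \<partial>lborel) = enn2real (excess q v)"
proof -
  let ?g = "\<lambda>t. indicator {0<..<1} t * max (q t - v) 0"
  have eq: "(\<lambda>t. ennreal (?g t)) = (\<lambda>t. ennreal (q t - v) * indicator {0<..<1} t)"
    by (auto simp: fun_eq_iff indicator_def ennreal_max_0 max.commute)
  have "(\<lambda>t. indicator {0<..<1} t * max (indicator {0<..<1} t * q t - v) 0) \<in> borel_measurable borel"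
    using borel_measurable_indicator_mult[of "{0<..<1}"] by measurable
  moreover have "indicator {0<..<1} t * max (indicator {0<..<1} t * q t - v) 0 = ?g t" for t
    by (auto simp: indicator_def)
  ultimately have meas: "?g \<in> borel_measurable borel" by simp
  show "integrable lborel ?g"
    using assms meas by (intro integrableI_nonneg) (auto simp: eq excess_def)
  show "(\<integral>t. ?g t \<partial>lborel) = enn2real (excess q v)"
    using meas by (subst integral_eq_nn_integral) (auto simp: eq excess_def)
qed

lemma integral_upper_tail_split:
  assumes "0 < p" "p < 1" "excess q v < \<top>"
  shows "(\<integral>t. indicator {p<..<1} t * q t \<partial>lborel) = (1 - p) * v + (\<integral>t. indicator {p<..<1} t * (q t - v) \<partial>lborel)"
proof -
  have "integrable lborel (\<lambda>t. indicator {p<..<1} t * q t)"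
    using integrable_upper_tail_of_excess_finite[OF assms] .
  moreover have "integrable lborel (\<lambda>t. indicator {p<..<1} t * v)"
    using assms by (intro integrable_mult_left) (simp add: integrable_indicator_iff emeasure_lborel_Ioo)
  ultimately show ?thesis
    using assms by (simp add: right_diff_distrib Bochner_Integration.integral_diff)
qed

text \<open>In the finite case, \<open>v \<mapsto> (1 - p) * v + excess q v\<close> is minimised at \<open>v = q p\<close>, with
  minimum the upper tail integral at \<open>p\<close>.\<close>

lemma integral_upper_tail_le:
  assumes "0 < p" "p < 1" "excess q v < \<top>"
  shows "(\<integral>t. indicator {p<..<1} t * q t \<partial>lborel) \<le> (1 - p) * v + enn2real (excess q v)"
proof -
  have "integrable lborel (\<lambda>t. indicator {p<..<1} t * (q t - v))"
    using integrable_upper_tail_of_excess_finite[OF assms] assms(1,2)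
    by (simp add: right_diff_distrib integrable_indicator_iff emeasure_lborel_Ioo)
  then have "(\<integral>t. indicator {p<..<1} t * (q t - v) \<partial>lborel) \<le> (\<integral>t. indicator {0<..<1} t * max (q t - v) 0 \<partial>lborel)"
    using integral_excess(1)[OF assms(3)] assms(1,2)
    by (intro integral_mono) (auto simp: indicator_def)
  then show ?thesis
    using integral_upper_tail_split[OF assms] integral_excess(2)[OF assms(3)] by simp
qed

lemma integral_upper_tail_eq:
  assumes "0 < p" "p < 1" "excess q (q p) < \<top>"
  shows "(\<integral>t. indicator {p<..<1} t * q t \<partial>lborel) = (1 - p) * q p + enn2real (excess q (q p))"
proof -
  have "indicator {p<..<1} t * (q t - q p) = indicator {0<..<1} t * max (q t - q p) 0" for t
  proof (cases "t \<in> {0<..<1}")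
    case True
    then have "t \<le> p \<Longrightarrow> q t \<le> q p" "p \<le> t \<Longrightarrow> q p \<le> q t"
      using assms by (auto intro!: mono_onD[OF mono])
    then show ?thesis using True by (auto simp: indicator_def)
  qed (use assms in \<open>auto simp: indicator_def\<close>)
  then show ?thesis
    using integral_upper_tail_split[OF assms] integral_excess(2)[OF assms(3)] by simp
qed

lemma excess_le_of_integral_upper_tail_le:
  assumes H: "\<And>p. 0 < p \<Longrightarrow> p < 1 \<Longrightarrow> integrable lborel (\<lambda>t. indicator {p<..<1} t * q t) \<and>
             (\<integral>t. indicator {p<..<1} t * q t \<partial>lborel) \<le> (1 - p) * w + c"
  shows "excess q w \<le> ennreal c"
proof -
  obtain r where r: "0 \<le> r" "r \<le> 1" "\<And>t. 0 < t \<Longrightarrow> t < r \<Longrightarrow> q t \<le> w"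
    "\<And>t. r < t \<Longrightarrow> t < 1 \<Longrightarrow> w < q t"
    using mono_on_level_crossing[OF mono] by blast
  have tail: "(\<integral>\<^sup>+t. ennreal (q t - w) * indicator {p<..<1} t \<partial>lborel) \<le> ennreal c"
    if "r < p" "p < 1" for p
    using that r(1,4) H[of p] by (intro nn_integral_tail_excess_le) (auto intro: less_imp_le)
  have "ennreal (q t - w) * indicator {0<..<1} t = ennreal (q t - w) * indicator {r<..<1} t" if "t \<noteq> r" for t
    using that r(1) r(3)[of t] by (cases "0 < t \<and> t < r") (auto simp: indicator_def ennreal_neg)
  then have "excess q w = (\<integral>\<^sup>+t. ennreal (q t - w) * indicator {r<..<1} t \<partial>lborel)"
    unfolding excess_def using AE_lborel_singleton[of r] by (auto intro!: nn_integral_cong_AE elim!: eventually_mono)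
  also have "\<dots> \<le> ennreal c"
  proof (cases "r < 1")
    case True
    let ?g = "\<lambda>t. ennreal (q t - w) * indicator {0<..<1} t"
    have restrict: "(\<integral>\<^sup>+t. ennreal (q t - w) * indicator {p<..<1} t \<partial>lborel) =
          (\<integral>\<^sup>+t. ?g t * indicator {p<..<1} t \<partial>lborel)" if "r \<le> p" for p
      using that r(1) by (intro nn_integral_cong) (auto simp: indicator_def)
    have "?g \<in> borel_measurable borel"
      by (rule borel_measurable_comp_indicator) simp
    then have "(\<integral>\<^sup>+t. ?g t * indicator {r<..<1} t \<partial>lborel) = (SUP p\<in>{r<..<1}. \<integral>\<^sup>+t. ?g t * indicator {p<..<1} t \<partial>lborel)"
      using True by (rule nn_integral_Ioo_eq_SUP)
    also have "\<dots> \<le> ennreal c"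
      using tail restrict by (intro SUP_least) auto
    finally show ?thesis using restrict[of r] by simp
  qed (use r(2) in simp)
  finally show ?thesis .
qed

end

lemma excess_le_of_upper_tail_le:
  fixes q1 q2 :: "real \<Rightarrow> real"
  assumes m1: "mono_on {0<..<1} q1" and m2: "mono_on {0<..<1} q2"
    and H: "\<forall>p. 0 < p \<and> p < 1 \<longrightarrow> conv_le (upper_tail q1 p) (upper_tail q2 p)"
  shows "conv_le (enn2ereal (excess q1 w)) (enn2ereal (excess q2 w))"
  unfolding conv_le_enn2ereal
proof (cases "excess q1 w < \<top> \<and> excess q2 w < \<top>")
  case True
  have "excess q1 w \<le> ennreal (enn2real (excess q2 w))"
  proof (rule excess_le_of_integral_upper_tail_le[OF m1])
    fix p :: real assume p: "0 < p" "p < 1"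
    have I1: "integrable lborel (\<lambda>t. indicator {p<..<1} t * q1 t)"
      and I2: "integrable lborel (\<lambda>t. indicator {p<..<1} t * q2 t)"
      using integrable_upper_tail_of_excess_finite[OF m1 p] integrable_upper_tail_of_excess_finite[OF m2 p]
        True by auto
    moreover have "conv_le (upper_tail q1 p) (upper_tail q2 p)" using H p by blast
    ultimately have "(\<integral>t. indicator {p<..<1} t * q1 t \<partial>lborel) \<le> (\<integral>t. indicator {p<..<1} t * q2 t \<partial>lborel)"
      unfolding upper_tail_eq[OF m1 p] upper_tail_eq[OF m2 p] conv_le_def by auto
    also have "\<dots> \<le> (1 - p) * w + enn2real (excess q2 w)"
      using integral_upper_tail_le[OF m2 p] True by auto
    finally show "integrable lborel (\<lambda>t. indicator {p<..<1} t * q1 t) \<and>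
        (\<integral>t. indicator {p<..<1} t * q1 t \<partial>lborel) \<le> (1 - p) * w + enn2real (excess q2 w)"
      using I1 by simp
  qed
  then show "excess q1 w = \<top> \<or> excess q1 w \<le> excess q2 w"
    using True by (auto simp: ennreal_enn2real_if split: if_splits)
qed (auto simp: less_top[symmetric])

lemma upper_tail_le_of_excess_le:
  fixes q1 q2 :: "real \<Rightarrow> real"
  assumes m1: "mono_on {0<..<1} q1" and m2: "mono_on {0<..<1} q2"
    and H: "\<forall>w. conv_le (enn2ereal (excess q1 w)) (enn2ereal (excess q2 w))" and p: "0 < p" "p < 1"
  shows "conv_le (upper_tail q1 p) (upper_tail q2 p)"
proof -
  let ?v = "q2 p"
  have infinite: "upper_tail q p = \<infinity>" if "mono_on {0<..<1} q" "excess q ?v = \<top>" for q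
    using excess_finite_of_integrable_upper_tail[OF that(1) p, of ?v] that(2)
    unfolding upper_tail_eq[OF that(1) p] by auto
  consider "excess q2 ?v = \<top>" | "excess q1 ?v = \<top>" | "excess q1 ?v \<le> excess q2 ?v" "excess q2 ?v < \<top>"
    using H unfolding conv_le_enn2ereal by (metis top.not_eq_extremum)
  then show ?thesis
  proof cases
    case 3
    then have T1: "excess q1 ?v < \<top>" by auto
    have "(\<integral>t. indicator {p<..<1} t * q1 t \<partial>lborel) \<le> (1 - p) * ?v + enn2real (excess q1 ?v)"
      using integral_upper_tail_le[OF m1 p T1] .
    also have "\<dots> \<le> (1 - p) * ?v + enn2real (excess q2 ?v)"
      using 3 by (simp add: enn2real_mono)
    also have "\<dots> = (\<integral>t. indicator {p<..<1} t * q2 t \<partial>lborel)"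
      using integral_upper_tail_eq[OF m2 p 3(2)] by simp
    finally show ?thesis
      using integrable_upper_tail_of_excess_finite[OF m1 p T1] integrable_upper_tail_of_excess_finite[OF m2 p 3(2)]
      unfolding upper_tail_eq[OF m1 p] upper_tail_eq[OF m2 p] conv_le_def by simp
  qed (use infinite m1 m2 in \<open>auto simp: conv_le_def\<close>)
qed

lemma upper_tail_le_iff_excess_le:
  fixes q1 q2 :: "real \<Rightarrow> real"
  assumes "mono_on {0<..<1} q1" "mono_on {0<..<1} q2"
  shows "(\<forall>p. 0 < p \<and> p < 1 \<longrightarrow> conv_le (upper_tail q1 p) (upper_tail q2 p)) \<longleftrightarrow>
         (\<forall>w. conv_le (enn2ereal (excess q1 w)) (enn2ereal (excess q2 w)))"
  using excess_le_of_upper_tail_le[OF assms] upper_tail_le_of_excess_le[OF assms] by blast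

definition reflect :: "(real \<Rightarrow> real) \<Rightarrow> real \<Rightarrow> real" where
  "reflect q t = - q (1 - t)"

lemma mono_on_reflect:
  assumes "mono_on {0<..<1} q"
  shows "mono_on {0<..<1} (reflect q)"
  unfolding reflect_def by (rule mono_onI) (auto intro!: mono_onD[OF assms])

lemma nn_integral_reflect:
  fixes f :: "real \<Rightarrow> ennreal"
  assumes "f \<in> borel_measurable borel"
  shows "(\<integral>\<^sup>+t. f (1 - t) \<partial>lborel) = (\<integral>\<^sup>+t. f t \<partial>lborel)"
  using nn_integral_real_affine[OF assms, of "-1" 1] by simp

lemma shortfall_eq_excess_reflect:
  assumes "mono_on {0<..<1} q"
  shows "shortfall q w = excess (reflect q) (- w)"
proof -
  have meas: "(\<lambda>t. ennreal (w - q t) * indicator {0<..<1} t) \<in> borel_measurable borel"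
    by (rule borel_measurable_comp_indicator[OF assms]) simp
  have "excess (reflect q) (- w) = (\<integral>\<^sup>+t. ennreal (w - q (1 - t)) * indicator {0<..<1} (1 - t) \<partial>lborel)"
    unfolding excess_def reflect_def by (intro nn_integral_cong) (auto simp: indicator_def)
  also have "\<dots> = shortfall q w"
    unfolding shortfall_def using nn_integral_reflect[OF meas] .
  finally show ?thesis by simp
qed

lemma lower_tail_eq_uminus_upper_tail_reflect:
  assumes m: "mono_on {0<..<1} q" and p: "0 < p" "p < 1"
  shows "lower_tail q p = - upper_tail (reflect q) (1 - p)"
proof -
  let ?g = "\<lambda>t. indicator {0<..<p} t * q t"
  have [measurable]: "?g \<in> borel_measurable borel" using p by (intro borel_measurable_indicator_mult[OF m]) auto
  have eq: "indicator {1-p<..<1} t * reflect q t = - ?g (1 - t)" for t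
    unfolding reflect_def by (auto simp: indicator_def)
  have pos: "(\<integral>\<^sup>+t. ennreal (- (indicator {1-p<..<1} t * reflect q t)) \<partial>lborel) = (\<integral>\<^sup>+t. ennreal (?g t) \<partial>lborel)"
    and neg: "(\<integral>\<^sup>+t. ennreal (indicator {1-p<..<1} t * reflect q t) \<partial>lborel) = (\<integral>\<^sup>+t. ennreal (- ?g t) \<partial>lborel)"
    unfolding eq by (simp_all add: nn_integral_reflect[of "\<lambda>t. ennreal (?g t)"] nn_integral_reflect[of "\<lambda>t. ennreal (- ?g t)"])
  have "(\<integral>\<^sup>+t. ennreal (?g t) \<partial>lborel) < \<infinity>"
    using nn_integral_upper_tail_neg_finite[OF mono_on_reflect[OF m], of "1 - p"] p unfolding pos by simp
  then show ?thesis
    unfolding lower_tail_def upper_tail_def ext_integral_def pos neg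
    by (intro ereal_minus_diff_eq[symmetric]) auto
qed

lemma conv_le_uminus: "conv_le (- a) (- b) \<longleftrightarrow> conv_le b a"
  unfolding conv_le_def by (cases a; cases b) auto

lemma lower_tail_ge_iff_shortfall_le:
  fixes q1 q2 :: "real \<Rightarrow> real"
  assumes m1: "mono_on {0<..<1} q1" and m2: "mono_on {0<..<1} q2"
  shows "(\<forall>p. 0 < p \<and> p < 1 \<longrightarrow> conv_le (lower_tail q2 p) (lower_tail q1 p)) \<longleftrightarrow>
         (\<forall>w. conv_le (enn2ereal (shortfall q1 w)) (enn2ereal (shortfall q2 w)))"
proof -
  have "(\<forall>p. 0 < p \<and> p < 1 \<longrightarrow> conv_le (lower_tail q2 p) (lower_tail q1 p)) \<longleftrightarrow>
        (\<forall>p. 0 < p \<and> p < 1 \<longrightarrow> conv_le (upper_tail (reflect q1) (1 - p)) (upper_tail (reflect q2) (1 - p)))"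
    using lower_tail_eq_uminus_upper_tail_reflect[OF m1] lower_tail_eq_uminus_upper_tail_reflect[OF m2]
    by (auto simp: conv_le_uminus)
  also have "\<dots> \<longleftrightarrow> (\<forall>p. 0 < p \<and> p < 1 \<longrightarrow> conv_le (upper_tail (reflect q1) p) (upper_tail (reflect q2) p))"
  proof (intro iffI allI impI)
    fix p :: real assume "0 < p \<and> p < 1"
    moreover assume "\<forall>p. 0 < p \<and> p < 1 \<longrightarrow> conv_le (upper_tail (reflect q1) (1 - p)) (upper_tail (reflect q2) (1 - p))"
    note this[rule_format, of "1 - p"]
    ultimately show "conv_le (upper_tail (reflect q1) p) (upper_tail (reflect q2) p)" by simp
  next
    fix p :: real assume "0 < p \<and> p < 1"
    moreover assume "\<forall>p. 0 < p \<and> p < 1 \<longrightarrow> conv_le (upper_tail (reflect q1) p) (upper_tail (reflect q2) p)"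
    ultimately show "conv_le (upper_tail (reflect q1) (1 - p)) (upper_tail (reflect q2) (1 - p))"
      by simp
  qed
  also have "\<dots> \<longleftrightarrow> (\<forall>w. conv_le (enn2ereal (excess (reflect q1) w)) (enn2ereal (excess (reflect q2) w)))"
    by (rule upper_tail_le_iff_excess_le[OF mono_on_reflect[OF m1] mono_on_reflect[OF m2]])
  also have "\<dots> \<longleftrightarrow> (\<forall>w. conv_le (enn2ereal (shortfall q1 w)) (enn2ereal (shortfall q2 w)))"
    unfolding shortfall_eq_excess_reflect[OF m1] shortfall_eq_excess_reflect[OF m2] by (metis minus_minus)
  finally show ?thesis .
qed

section \<open>Quantile functions\<close>

lemma quantile_law:
  assumes "prob_space M" "X \<in> borel_measurable M"
  shows "mono_on {0<..<1} (quantile M X)"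
    and "distr (restrict_space lborel {0<..<1}) borel (quantile M X) = distr M borel X"
proof -
  interpret prob_space M by fact
  interpret D: cdf_distribution "distr M borel X"
    unfolding cdf_distribution_def using assms by simp
  have "cdf (distr M borel X) x = measure M {\<omega> \<in> space M. X \<omega> \<le> x}" for x
    unfolding cdf_def using assms by (subst measure_distr) (auto intro!: arg_cong[where f="measure M"])
  then have q: "quantile M X = D.I"
    unfolding quantile_def by auto
  show "mono_on {0<..<1} (quantile M X)" unfolding q by (rule D.mono_I)
  show "distr (restrict_space lborel {0<..<1}) borel (quantile M X) = distr M borel X"
    unfolding q by (rule D.distr_I_eq_M)
qed

lemma nn_integral_quantile:
  assumes "prob_space M" "X \<in> borel_measurable M" "g \<in> borel_measurable borel"
  shows "(\<integral>\<^sup>+\<omega>. g (X \<omega>) \<partial>M) = (\<integral>\<^sup>+t. g (quantile M X t) * indicator {0<..<1} t \<partial>lborel)"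
proof -
  have "quantile M X \<in> restrict_space lborel {0<..<1} \<rightarrow>\<^sub>M borel"
    using borel_measurable_mono_on_fnc[OF quantile_law(1)[OF assms(1,2)]]
    by (simp add: measurable_def space_restrict_space sets_restrict_space)
  then have "(\<integral>\<^sup>+x. g x \<partial>distr M borel X) = (\<integral>\<^sup>+t. g (quantile M X t) \<partial>restrict_space lborel {0<..<1})"
    using assms by (simp add: nn_integral_distr flip: quantile_law(2)[OF assms(1,2)])
  then show ?thesis
    using assms by (simp add: nn_integral_distr nn_integral_restrict_space)
qed

lemma nn_integral_hinge_eq_excess:
  assumes "prob_space M" "X \<in> borel_measurable M"
  shows "(\<integral>\<^sup>+\<omega>. ennreal (max (X \<omega> - w) 0) \<partial>M) = excess (quantile M X) w"
  unfolding excess_def using assms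
  by (subst nn_integral_quantile[where g="\<lambda>x. ennreal (max (x - w) 0)"]) (auto simp: ennreal_max_0 max.commute)

lemma nn_integral_hinge_eq_shortfall:
  assumes "prob_space M" "X \<in> borel_measurable M"
  shows "(\<integral>\<^sup>+\<omega>. ennreal (max (- (X \<omega> - w)) 0) \<partial>M) = shortfall (quantile M X) w"
  unfolding shortfall_def using assms
  by (subst nn_integral_quantile[where g="\<lambda>x. ennreal (max (- (x - w)) 0)"]) (auto simp: ennreal_max_0 max.commute)

theorem theorem2:
  fixes M :: "'a measure" and X Y :: "'a \<Rightarrow> real"
  assumes "prob_space M" and "atomless M"
    and "X \<in> borel_measurable M" and "Y \<in> borel_measurable M"
  shows "(dagger_cx M X Y \<longleftrightarrow>
          (\<forall>p::real. 0 < p \<and> p < 1 \<longrightarrow>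
             conv_le (ext_integral lborel (\<lambda>t. indicator {0<..<p} t * quantile M Y t))
                     (ext_integral lborel (\<lambda>t. indicator {0<..<p} t * quantile M X t)) \<and>
             conv_le (ext_integral lborel (\<lambda>t. indicator {p<..<1} t * quantile M X t))
                     (ext_integral lborel (\<lambda>t. indicator {p<..<1} t * quantile M Y t))))
       \<and> (dagger_cx M X Y \<longleftrightarrow>
          (\<forall>w::real.
             conv_le (enn2ereal (\<integral>\<^sup>+ \<omega>. ennreal (max (-(X \<omega> - w)) 0) \<partial>M))
                     (enn2ereal (\<integral>\<^sup>+ \<omega>. ennreal (max (-(Y \<omega> - w)) 0) \<partial>M)) \<and>
             conv_le (enn2ereal (\<integral>\<^sup>+ \<omega>. ennreal (max (X \<omega> - w) 0) \<partial>M))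
                     (enn2ereal (\<integral>\<^sup>+ \<omega>. ennreal (max (Y \<omega> - w) 0) \<partial>M))))"
proof -
  note P = assms(1) and mX = assms(3) and mY = assms(4)
  note mono = quantile_law(1)[OF P mX] quantile_law(1)[OF P mY]
  have upper: "stop_loss_le M X Y \<longleftrightarrow> (\<forall>p. 0 < p \<and> p < 1 \<longrightarrow>
      conv_le (ext_integral lborel (\<lambda>t. indicator {p<..<1} t * quantile M X t))
              (ext_integral lborel (\<lambda>t. indicator {p<..<1} t * quantile M Y t)))"
    unfolding stop_loss_le_def nn_integral_hinge_eq_excess[OF P mX] nn_integral_hinge_eq_excess[OF P mY]
    using upper_tail_le_iff_excess_le[OF mono] unfolding upper_tail_def by simp
  have lower: "stop_loss_le M (\<lambda>\<omega>. - X \<omega>) (\<lambda>\<omega>. - Y \<omega>) \<longleftrightarrow> (\<forall>p. 0 < p \<and> p < 1 \<longrightarrow>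
      conv_le (ext_integral lborel (\<lambda>t. indicator {0<..<p} t * quantile M Y t))
              (ext_integral lborel (\<lambda>t. indicator {0<..<p} t * quantile M X t)))"
    unfolding stop_loss_le_uminus_iff nn_integral_hinge_eq_shortfall[OF P mX] nn_integral_hinge_eq_shortfall[OF P mY]
    using lower_tail_ge_iff_shortfall_le[OF mono] unfolding lower_tail_def by simp
  show ?thesis
    using dagger_cx_iff_stop_loss_le[OF P mX mY] upper lower
      stop_loss_le_def[of M X Y] stop_loss_le_uminus_iff[of M X Y] by blast
qed

end
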